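(* Let $k\ge1$, let $\Pi_0,\Pi_1,\Pi\in\mathrm{Part}_2(2k)$ with $\Pi_0,\Pi_1$ perfect matchings and $\#(\Pi_0\vee\Pi_1\vee\Pi)=1$, and let $\varphi_0,\varphi_1$ be as follows: for $i=0,1$, $\varphi_i:\{1,\dots,2k\}\to V_i$ is a surjection whose level sets are exactly the parts of $\Pi_i\vee\Pi$, with $V_0\cap V_1=\emptyset$. Assume $\#(\Pi_0\vee\Pi_1)>1$. Then for every $A\in\Pi_0\vee\Pi_1$ there exist $m\in A$, a part $A'\in\Pi_0\vee\Pi_1$ with $A'\ne A$, and $m'\in A'$ such that $\{\varphi_0(m),\varphi_1(m)\}=\{\varphi_0(m'),\varphi_1(m')\}$.
   Context: $\mathrm{Part}(k)$ is the set of set partitions of $\{1,\dots,k\}$; $\Sigma$ refines $\Pi$ if every part of $\Sigma$ lies in a part of $\Pi$; $\Pi\vee\Sigma$ is the finest partition refined by both; a perfect matching is a partition all of whose parts have size 2; $\mathrm{Part}_2(k)$ is the set of partitions all of whose parts have size at least 2. *)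

theory Defs
  imports "HOL-Library.Disjoint_Sets"
begin

definition Part :: "nat \<Rightarrow> nat set set set" where
  "Part n = {P. partition_on {1..n} P}"

definition refines :: "nat set set \<Rightarrow> nat set set \<Rightarrow> bool" where
  "refines S P \<longleftrightarrow> (\<forall>B\<in>S. \<exists>C\<in>P. B \<subseteq> C)"

definition pjoin :: "nat \<Rightarrow> nat set set \<Rightarrow> nat set set \<Rightarrow> nat set set" where
  "pjoin n X Y = (THE J. J \<in> Part n \<and> refines X J \<and> refines Y J \<and>
      (\<forall>Q\<in>Part n. refines X Q \<and> refines Y Q \<longrightarrow> refines J Q))"

definition perfect_matching :: "nat set set \<Rightarrow> bool" where
  "perfect_matching P \<longleftrightarrow> (\<forall>B\<in>P. card B = 2)"

definition Part2 :: "nat \<Rightarrow> nat set set set" where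
  "Part2 n = {P \<in> Part n. \<forall>B\<in>P. card B \<ge> 2}"

end

theory Submission
  imports Defs
begin

text \<open>
  Since \<open>\<Pi>\<^sub>0 \<squnion> \<Pi>\<^sub>1 \<squnion> \<Pi>\<close> has a single block, a block \<open>A\<close> of \<open>\<Pi>\<^sub>0 \<squnion> \<Pi>\<^sub>1\<close> other
  than the whole ground set cannot be a union of blocks of \<open>\<Pi>\<close>: otherwise \<open>{A, A\<^sup>c}\<close>
  would be a common coarsening of \<open>\<Pi>\<^sub>0 \<squnion> \<Pi>\<^sub>1\<close> and \<open>\<Pi>\<close>. Hence some block of \<open>\<Pi>\<close>
  contains \<open>m \<in> A\<close> and \<open>m' \<notin> A\<close>. As \<open>\<Pi>\<close> refines \<open>\<Pi>\<^sub>i \<squnion> \<Pi>\<close>, the partition into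
  level sets of \<open>\<phi>\<^sub>i\<close>, both \<open>\<phi>\<^sub>0\<close> and \<open>\<phi>\<^sub>1\<close> agree at \<open>m\<close> and \<open>m'\<close>.
\<close>

definition same_block :: "'a set set \<Rightarrow> 'a rel" where
  "same_block P = {(x, y). \<exists>p\<in>P. x \<in> p \<and> y \<in> p}"

lemma mem_same_block_iff [simp]: "(x, y) \<in> same_block P \<longleftrightarrow> (\<exists>p\<in>P. x \<in> p \<and> y \<in> p)"
  by (simp add: same_block_def)

lemma same_block_mono:
  assumes "refines X Q"
  shows "same_block X \<subseteq> same_block Q"
proof clarsimp
  fix x y p assume "p \<in> X" "x \<in> p" "y \<in> p"
  moreover obtain q where "q \<in> Q" "p \<subseteq> q"
    using assms \<open>p \<in> X\<close> unfolding refines_def by blast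
  ultimately show "\<exists>q\<in>Q. x \<in> q \<and> y \<in> q" by blast
qed

lemma same_block_Image:
  assumes "partition_on S Q" "q \<in> Q" "x \<in> q"
  shows "same_block Q `` {x} = q"
proof (intro equalityI subsetI)
  fix y assume "y \<in> same_block Q `` {x}"
  then obtain p where "p \<in> Q" "x \<in> p" "y \<in> p" by auto
  then have "p = q"
    using assms unfolding partition_on_def disjoint_def by blast
  then show "y \<in> q" using \<open>y \<in> p\<close> by simp
qed (use assms in auto)

lemma equiv_same_block: "partition_on S P \<Longrightarrow> equiv S (same_block P)"
  unfolding same_block_def by (rule equiv_partition_on)

lemma join_exists:
  assumes X: "X \<in> Part n" and Y: "Y \<in> Part n"
  shows "\<exists>J\<in>Part n. refines X J \<and> refines Y J \<and>
      (\<forall>Q\<in>Part n. refines X Q \<and> refines Y Q \<longrightarrow> refines J Q)"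
proof -
  define S where "S = {1..n}"
  define E where "E = (same_block X \<union> same_block Y)\<^sup>+"
  have eqX: "equiv S (same_block X)" and eqY: "equiv S (same_block Y)"
    using X Y by (simp_all add: Part_def S_def equiv_same_block)
  have "equiv S E"
  proof (rule equivI)
    have "same_block X \<union> same_block Y \<subseteq> S \<times> S"
      using equiv_type[OF eqX] equiv_type[OF eqY] by (rule Un_least)
    then show "E \<subseteq> S \<times> S"
      unfolding E_def by (rule trancl_subset_Sigma)
    show "refl_on S E"
    proof
      fix x assume "x \<in> S"
      then have "(x, x) \<in> same_block X"
        using eqX by (simp add: equiv_def refl_on_def)
      then show "(x, x) \<in> E" unfolding E_def by (simp add: r_into_trancl')
    qed
    show "sym E"
      using eqX eqY unfolding E_def equiv_def by (simp add: sym_Un sym_trancl)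
    show "trans E"
      unfolding E_def by (rule trans_trancl)
  qed
  define J where "J = S // E"
  have "J \<in> Part n"
    using partition_on_quotient[OF \<open>equiv S E\<close>] by (simp add: Part_def J_def S_def)
  moreover have "refines Z J" if Z: "Z \<in> {X, Y}" for Z
    unfolding refines_def
  proof
    fix B assume "B \<in> Z"
    then have "B \<subseteq> S" "B \<noteq> {}"
      using Z X Y by (auto simp: Part_def S_def partition_on_def)
    then obtain x where "x \<in> B" "x \<in> S" by blast
    have "B \<subseteq> E `` {x}"
    proof
      fix y assume "y \<in> B"
      then have "(x, y) \<in> same_block X \<union> same_block Y"
        using Z \<open>B \<in> Z\<close> \<open>x \<in> B\<close> by auto
      then show "y \<in> E `` {x}" unfolding E_def by (simp add: r_into_trancl')
    qed
    moreover have "E `` {x} \<in> J"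
      unfolding J_def using \<open>x \<in> S\<close> by (rule quotientI)
    ultimately show "\<exists>C\<in>J. B \<subseteq> C" by blast
  qed
  moreover have "refines J Q" if Q: "Q \<in> Part n" "refines X Q" "refines Y Q" for Q
    unfolding refines_def
  proof
    fix D assume "D \<in> J"
    then obtain x where D: "D = E `` {x}" "x \<in> S"
      unfolding J_def by (rule quotientE)
    have pQ: "partition_on S Q" using Q by (simp add: Part_def S_def)
    then obtain q where q: "q \<in> Q" "x \<in> q" using D unfolding partition_on_def by blast
    have "same_block X \<union> same_block Y \<subseteq> same_block Q"
      using same_block_mono[OF Q(2)] same_block_mono[OF Q(3)] by (rule Un_least)
    then have "E \<subseteq> (same_block Q)\<^sup>+"
      unfolding E_def by (rule trancl_mono_subset)
    also have "\<dots> = same_block Q"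
      using equiv_same_block[OF pQ] by (simp add: equiv_def)
    finally have "D \<subseteq> same_block Q `` {x}" using D by blast
    then show "\<exists>C\<in>Q. D \<subseteq> C" using q same_block_Image[OF pQ q] by blast
  qed
  ultimately show ?thesis by blast
qed

lemma Part_refines_antisym:
  assumes "P \<in> Part n" "Q \<in> Part n" "refines P Q" "refines Q P"
  shows "P = Q"
  using assms Disjoint_Sets.refines_asym[of "{1..n}" P Q]
  unfolding Part_def Disjoint_Sets.refines_def refines_def by blast

lemma
  assumes "X \<in> Part n" "Y \<in> Part n"
  shows pjoin_in_Part: "pjoin n X Y \<in> Part n"
    and refines_pjoin_left: "refines X (pjoin n X Y)"
    and refines_pjoin_right: "refines Y (pjoin n X Y)"
    and pjoin_least: "\<And>Q. Q \<in> Part n \<Longrightarrow> refines X Q \<Longrightarrow> refines Y Q \<Longrightarrow> refines (pjoin n X Y) Q"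
proof -
  have "\<exists>!J. J \<in> Part n \<and> refines X J \<and> refines Y J \<and>
      (\<forall>Q\<in>Part n. refines X Q \<and> refines Y Q \<longrightarrow> refines J Q)" (is "\<exists>!J. ?join J")
  proof (rule ex_ex1I)
    show "\<exists>J. ?join J" using join_exists[OF assms] by blast
    show "J = J'" if "?join J" "?join J'" for J J'
      using that Part_refines_antisym[of J n J'] by blast
  qed
  from theI'[OF this, folded pjoin_def]
  show "pjoin n X Y \<in> Part n" "refines X (pjoin n X Y)" "refines Y (pjoin n X Y)"
    "\<And>Q. Q \<in> Part n \<Longrightarrow> refines X Q \<Longrightarrow> refines Y Q \<Longrightarrow> refines (pjoin n X Y) Q"
    by blast+
qed

lemma partition_on_block_neq_space:
  assumes "partition_on S P" "1 < card P" "A \<in> P"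
  shows "A \<noteq> S"
proof
  assume "A = S"
  have "P \<subseteq> {A}"
  proof
    fix B assume "B \<in> P"
    then have "B \<noteq> {}" "B \<subseteq> A" using assms(1) \<open>A = S\<close> unfolding partition_on_def by auto
    then show "B \<in> {A}"
      using assms(1,3) \<open>B \<in> P\<close> unfolding partition_on_def disjoint_def by blast
  qed
  then have "card P \<le> 1" using card_mono[of "{A}" P] by simp
  then show False using assms(2) by simp
qed

lemma partition_on_complement:
  assumes "A \<subseteq> S" "A \<noteq> {}" "A \<noteq> S"
  shows "partition_on S {A, S - A}"
  using assms unfolding partition_on_def disjoint_def by blast

lemma pjoin_eq_singleton:
  assumes "X \<in> Part n" "Y \<in> Part n" "card (pjoin n X Y) = 1"
  shows "pjoin n X Y = {{1..n}}"
proof -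
  obtain T where "pjoin n X Y = {T}"
    using assms(3) by (auto simp: card_Suc_eq)
  moreover have "\<Union>(pjoin n X Y) = {1..n}"
    using pjoin_in_Part[OF assms(1,2)] by (simp add: Part_def partition_on_def)
  ultimately show ?thesis by simp
qed

lemma pjoin_single_block_crossing:
  assumes X: "X \<in> Part n" and Y: "Y \<in> Part n" and "card (pjoin n X Y) = 1"
    and A: "A \<in> X" "A \<noteq> {1..n}"
  obtains B m m' where "B \<in> Y" "m \<in> B" "m' \<in> B" "m \<in> A" "m' \<notin> A"
proof (rule ccontr)
  assume no_crossing: "\<not> thesis"
  define S where "S = {1..n}"
  define Q where "Q = {A, S - A}"
  have pX: "partition_on S X" and pY: "partition_on S Y"
    using X Y by (simp_all add: Part_def S_def)
  have "A \<subseteq> S" "A \<noteq> {}" using pX A unfolding partition_on_def by auto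
  then have "Q \<in> Part n"
    using partition_on_complement A(2) by (simp add: Part_def Q_def S_def)
  moreover have "refines X Q"
    unfolding refines_def
  proof
    fix B assume "B \<in> X"
    then have "B = A \<or> B \<inter> A = {}" "B \<subseteq> S"
      using pX A(1) unfolding partition_on_def disjoint_def by auto
    then show "\<exists>C\<in>Q. B \<subseteq> C" unfolding Q_def by blast
  qed
  moreover have "refines Y Q"
    unfolding refines_def
  proof
    fix B assume "B \<in> Y"
    then have "B \<subseteq> A \<or> B \<inter> A = {}" "B \<subseteq> S"
      using no_crossing that pY unfolding partition_on_def by blast+
    then show "\<exists>C\<in>Q. B \<subseteq> C" unfolding Q_def by blast
  qed
  ultimately have "refines {S} Q"
    using pjoin_least[OF X Y] pjoin_eq_singleton[OF X Y assms(3)] by (simp add: S_def)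
  then have "S \<subseteq> A \<or> S \<subseteq> S - A" unfolding refines_def Q_def by simp
  then show False using \<open>A \<subseteq> S\<close> \<open>A \<noteq> {}\<close> A(2) S_def by blast
qed

lemma refines_level_sets_imp_eq:
  assumes "refines P {{x \<in> S. f x = v} | v. v \<in> V}" "B \<in> P" "m \<in> B" "m' \<in> B"
  shows "f m = f m'"
  using assms unfolding refines_def by blast

theorem lemma3p5:
  fixes k :: nat and Pi0 Pi1 Pi :: "nat set set"
    and \<phi>0 \<phi>1 :: "nat \<Rightarrow> 'v" and V0 V1 :: "'v set"
  assumes "k \<ge> 1"
    and "Pi0 \<in> Part2 (2*k)" and "Pi1 \<in> Part2 (2*k)" and "Pi \<in> Part2 (2*k)"
    and "perfect_matching Pi0" and "perfect_matching Pi1"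
    and "card (pjoin (2*k) (pjoin (2*k) Pi0 Pi1) Pi) = 1"
    and "\<phi>0 ` {1..2*k} = V0" and "\<phi>1 ` {1..2*k} = V1"
    and "{{x \<in> {1..2*k}. \<phi>0 x = v} | v. v \<in> V0} = pjoin (2*k) Pi0 Pi"
    and "{{x \<in> {1..2*k}. \<phi>1 x = v} | v. v \<in> V1} = pjoin (2*k) Pi1 Pi"
    and "V0 \<inter> V1 = {}"
    and "card (pjoin (2*k) Pi0 Pi1) > 1"
  shows "\<forall>A \<in> pjoin (2*k) Pi0 Pi1. \<exists>m\<in>A. \<exists>A'\<in>pjoin (2*k) Pi0 Pi1. A' \<noteq> A \<and>
           (\<exists>m'\<in>A'. {\<phi>0 m, \<phi>1 m} = {\<phi>0 m', \<phi>1 m'})"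
proof
  fix A assume A: "A \<in> pjoin (2*k) Pi0 Pi1"
  have P0: "Pi0 \<in> Part (2*k)" and P1: "Pi1 \<in> Part (2*k)" and P: "Pi \<in> Part (2*k)"
    using assms(2-4) by (auto simp: Part2_def)
  have pJ: "partition_on {1..2*k} (pjoin (2*k) Pi0 Pi1)"
    using pjoin_in_Part[OF P0 P1] by (simp add: Part_def)
  obtain B m m' where B: "B \<in> Pi" "m \<in> B" "m' \<in> B" "m \<in> A" "m' \<notin> A"
    using pjoin_single_block_crossing[OF pjoin_in_Part[OF P0 P1] P assms(7) A]
      partition_on_block_neq_space[OF pJ assms(13) A] by blast
  obtain A' where A': "A' \<in> pjoin (2*k) Pi0 Pi1" "m' \<in> A'"
    using B P pJ unfolding Part_def partition_on_def by blast
  have "\<phi>0 m = \<phi>0 m'" "\<phi>1 m = \<phi>1 m'"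
    using refines_level_sets_imp_eq[OF refines_pjoin_right[OF P0 P, folded assms(10)] B(1-3)]
      refines_level_sets_imp_eq[OF refines_pjoin_right[OF P1 P, folded assms(11)] B(1-3)] by auto
  then show "\<exists>m\<in>A. \<exists>A'\<in>pjoin (2*k) Pi0 Pi1. A' \<noteq> A \<and>
      (\<exists>m'\<in>A'. {\<phi>0 m, \<phi>1 m} = {\<phi>0 m', \<phi>1 m'})"
  proof (intro bexI conjI)
    show "A' \<noteq> A" using A' B(5) by blast
  qed (use A' B(4) in auto)
qed

end
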